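(* Let $m\ge2$ and let $\mathcal{C}\in\mathbb{S}_{m,n}$ be a symmetric Cauchy tensor with generating vector $c=(c_1,\dots,c_n)^T$. The following are equivalent: (i) $\mathcal{C}$ is completely positive; (ii) $\mathcal{C}$ is strictly copositive; (iii) $c>0$ (all $c_i>0$); (iv) the function $f_{\mathcal{C}}(x)=\mathcal{C}x^m$ is strictly monotonically increasing on $\mathbb{R}^n_+$, i.e. $f_{\mathcal{C}}(x)>f_{\mathcal{C}}(y)$ whenever $x,y\in\mathbb{R}^n_+$, $x\ge y$ entrywise and $x\ne y$; (v) $\mathcal{C}$ is doubly nonnegative.
   Context: Given $c\in\mathbb{R}^n$ with $c_i\ne0$ for all $i$ and $c_{i_1}+\dots+c_{i_m}\ne0$ for all $i_1,\dots,i_m\in[n]$, the symmetric Cauchy tensor with generating vector $c$ is $\mathcal{C}=(c_{i_1\ldots i_m})$ with $c_{i_1\ldots i_m}=1/(c_{i_1}+\dots+c_{i_m})$. $\mathcal{A}x^m=\sum a_{i_1\ldots i_m}x_{i_1}\cdots x_{i_m}$; $(\mathcal{A}x^{m-1})_i=\sum_{i_2,\dots,i_m}a_{ii_2\ldots i_m}x_{i_2}\cdots x_{i_m}$; an H-eigenvalue is $\lambda\in\mathbb{R}$ with $\mathcal{A}x^{m-1}=\lambda(x_i^{m-1})_i$ for some nonzero real $x$. Completely positive: $\mathcal{A}=\sum_{k=1}^r(u^{(k)})^m$ with $u^{(k)}\in\mathbb{R}^n_+$, where $(u^m)_{i_1\ldots i_m}=u_{i_1}\cdots u_{i_m}$.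 Strictly copositive: $\mathcal{A}x^m>0$ for all $x\in\mathbb{R}^n_+\setminus\{0\}$. Doubly nonnegative: all entries and all H-eigenvalues nonnegative. *)

theory Defs
  imports Complex_Main
begin

text \<open>An m-th order n-dimensional real tensor is represented as a function on
index tuples, i.e. lists of length m with entries in {0..<n} (0-based indices).
Vectors in R^n are functions nat => real, only components i < n being relevant.\<close>

definition idx :: "nat \<Rightarrow> nat \<Rightarrow> nat list set" where
  "idx n m = {is. length is = m \<and> set is \<subseteq> {..<n}}"

definition tform :: "nat \<Rightarrow> nat \<Rightarrow> (nat list \<Rightarrow> real) \<Rightarrow> (nat \<Rightarrow> real) \<Rightarrow> real" where
  "tform n m A x = (\<Sum>is\<in>idx n m. A is * prod_list (map x is))"

definition tapply :: "nat \<Rightarrow> nat \<Rightarrow> (nat list \<Rightarrow> real) \<Rightarrow> (nat \<Rightarrow> real) \<Rightarrow> nat \<Rightarrow> real" where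
  "tapply n m A x i = (\<Sum>js\<in>idx n (m - 1). A (i # js) * prod_list (map x js))"

definition H_eigenvalue :: "nat \<Rightarrow> nat \<Rightarrow> (nat list \<Rightarrow> real) \<Rightarrow> real \<Rightarrow> bool" where
  "H_eigenvalue n m A lam \<longleftrightarrow>
     (\<exists>x. (\<forall>i. n \<le> i \<longrightarrow> x i = 0) \<and> (\<exists>i<n. x i \<noteq> 0) \<and>
          (\<forall>i<n. tapply n m A x i = lam * x i ^ (m - 1)))"

definition cauchy_gen_ok :: "nat \<Rightarrow> nat \<Rightarrow> (nat \<Rightarrow> real) \<Rightarrow> bool" where
  "cauchy_gen_ok n m c \<longleftrightarrow> (\<forall>i<n. c i \<noteq> 0) \<and> (\<forall>is\<in>idx n m. sum_list (map c is) \<noteq> 0)"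

definition cauchy_tensor :: "(nat \<Rightarrow> real) \<Rightarrow> nat list \<Rightarrow> real" where
  "cauchy_tensor c is = 1 / sum_list (map c is)"

definition completely_positive :: "nat \<Rightarrow> nat \<Rightarrow> (nat list \<Rightarrow> real) \<Rightarrow> bool" where
  "completely_positive n m A \<longleftrightarrow>
     (\<exists>(r::nat) (u::nat \<Rightarrow> nat \<Rightarrow> real).
        (\<forall>k<r. \<forall>i<n. u k i \<ge> 0) \<and>
        (\<forall>is\<in>idx n m. A is = (\<Sum>k<r. prod_list (map (u k) is))))"

definition nonneg_vec :: "nat \<Rightarrow> (nat \<Rightarrow> real) \<Rightarrow> bool" where
  "nonneg_vec n x \<longleftrightarrow> (\<forall>i<n. x i \<ge> 0)"

definition strictly_copositive :: "nat \<Rightarrow> nat \<Rightarrow> (nat list \<Rightarrow> real) \<Rightarrow> bool" where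
  "strictly_copositive n m A \<longleftrightarrow>
     (\<forall>x. nonneg_vec n x \<and> (\<exists>i<n. x i \<noteq> 0) \<longrightarrow> tform n m A x > 0)"

definition strictly_increasing_on_nonneg :: "nat \<Rightarrow> nat \<Rightarrow> (nat list \<Rightarrow> real) \<Rightarrow> bool" where
  "strictly_increasing_on_nonneg n m A \<longleftrightarrow>
     (\<forall>x y. nonneg_vec n x \<and> nonneg_vec n y \<and> (\<forall>i<n. y i \<le> x i) \<and> (\<exists>i<n. x i \<noteq> y i)
        \<longrightarrow> tform n m A x > tform n m A y)"

definition doubly_nonnegative :: "nat \<Rightarrow> nat \<Rightarrow> (nat list \<Rightarrow> real) \<Rightarrow> bool" where
  "doubly_nonnegative n m A \<longleftrightarrow>
     (\<forall>is\<in>idx n m. A is \<ge> 0) \<and> (\<forall>lam. H_eigenvalue n m A lam \<longrightarrow> lam \<ge> 0)"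

end

theory Submission
  imports Defs
begin

text \<open>The diagonal entry of C at (i, \<dots>, i) is 1 / (m c(i)); complete positivity, strict
  copositivity, strict monotonicity and double nonnegativity all make it nonnegative, hence c > 0.
  Conversely, for c > 0 every entry is 1 / s with s = c(i1) + \<dots> + c(im) > 0, and
  1 / s is the integral over [0, \<infinity>) of exp (- c(i1) t) \<cdot> \<dots> \<cdot> exp (- c(im) t). Riemann sums of
  this integral are sums of rank-one tensors u^m with u = (exp (- c(i) t))(i) \<ge> 0, so C is a limit
  of completely positive tensors. The completely positive cone is closed: by Caratheodory's
  theorem the number of rank-one terms can be bounded by the number of entries, the diagonal
  entries bound the vectors, and a convergent subsequence of the vectors yields a decomposition
  of the limit. Finally, completely positive tensors have nonnegative H-eigenvalues, and a tensor
  with nonnegative entries and positive diagonal is strictly increasing on the nonnegative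
  orthant, hence strictly copositive.\<close>

lemma finite_idx: "finite (idx n m)"
proof -
  have "idx n m = {xs. set xs \<subseteq> {..<n} \<and> length xs = m}" by (auto simp: idx_def)
  thus ?thesis using finite_lists_length_eq[of "{..<n}" m] by simp
qed

lemma replicate_in_idx: "i < n \<Longrightarrow> replicate m i \<in> idx n m"
  by (auto simp: idx_def)

lemma idx_Suc: "idx n (Suc d) = (\<lambda>(j, js). j # js) ` ({..<n} \<times> idx n d)"
  by (auto simp: idx_def image_iff length_Suc_conv)

lemma prod_list_map_mult:
  "prod_list (map (\<lambda>j. f j * g j) xs) = prod_list (map f xs) * (prod_list (map g xs) :: 'a::comm_monoid_mult)"
  by (induction xs) (auto simp: mult_ac)

lemma prod_list_map_const_mult:
  "prod_list (map (\<lambda>j. a * f j) xs) = a ^ length xs * (prod_list (map f xs) :: 'a::comm_monoid_mult)"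
  by (simp add: prod_list_map_mult map_replicate_const)

lemma prod_list_map_exp: "prod_list (map (\<lambda>j. exp (f j :: real)) xs) = exp (sum_list (map f xs))"
  by (induction xs) (simp_all add: exp_add)

lemma prod_list_map_mono:
  "\<forall>j\<in>set xs. 0 \<le> f j \<and> f j \<le> (g j :: real) \<Longrightarrow>
    prod_list (map f xs) \<le> prod_list (map g xs)"
  by (induction xs) (auto intro!: mult_mono prod_list_nonneg)

lemma tendsto_prod_list:
  fixes f :: "nat \<Rightarrow> 'i \<Rightarrow> real"
  shows "\<forall>j\<in>set xs. (\<lambda>M. f M j) \<longlonglongrightarrow> g j \<Longrightarrow>
    (\<lambda>M. prod_list (map (f M) xs)) \<longlonglongrightarrow> prod_list (map g xs)"
  by (induction xs) (auto intro!: tendsto_mult)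

lemma sum_idx_prod_list: "(\<Sum>js\<in>idx n d. prod_list (map f js)) = (\<Sum>j<n. f j :: real) ^ d"
proof (induction d)
  case 0
  have "idx n 0 = {[]}" by (auto simp: idx_def)
  thus ?case by simp
next
  case (Suc d)
  have inj: "inj_on (\<lambda>(j, js). j # js) ({..<n} \<times> idx n d)" by (auto simp: inj_on_def)
  have "(\<Sum>js\<in>idx n (Suc d). prod_list (map f js))
      = (\<Sum>(j, js)\<in>{..<n} \<times> idx n d. f j * prod_list (map f js))"
    unfolding idx_Suc by (subst sum.reindex[OF inj]) (simp add: case_prod_beta)
  also have "\<dots> = (\<Sum>j<n. f j * (\<Sum>js\<in>idx n d. prod_list (map f js)))"
    by (simp add: sum.cartesian_product[symmetric] sum_distrib_left)
  finally show ?case using Suc by (simp add: sum_distrib_right)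
qed

lemma tform_unit_vector:
  assumes "i < n"
  shows "tform n m A (\<lambda>j. if j = i then 1 else 0) = A (replicate m i)"
proof -
  have "prod_list (map (\<lambda>j. if j = i then 1 else 0::real) is) = (if is = replicate (length is) i then 1 else 0)"
    for "is" by (induction "is") auto
  hence "tform n m A (\<lambda>j. if j = i then 1 else 0) = (\<Sum>is\<in>idx n m. if is = replicate m i then A is else 0)"
    unfolding tform_def by (intro sum.cong refl) (auto simp: idx_def)
  also have "\<dots> = A (replicate m i)"
    using finite_idx replicate_in_idx[OF assms] by (simp add: sum.delta')
  finally show ?thesis .
qed

lemma tform_zero: "m \<ge> 1 \<Longrightarrow> tform n m A (\<lambda>_. 0) = 0"
  unfolding tform_def by (intro sum.neutral) (auto simp: idx_def neq_Nil_conv Suc_le_length_iff)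

section \<open>Caratheodory's theorem for conic combinations\<close>

lemma homogeneous_system_nontrivial_solution:
  fixes A :: "'e \<Rightarrow> 'k \<Rightarrow> real"
  assumes "finite E" "finite K" "card E < card K"
  shows "\<exists>l. (\<exists>k\<in>K. l k \<noteq> 0) \<and> (\<forall>e\<in>E. (\<Sum>k\<in>K. A e k * l k) = 0)"
  using assms
proof (induction E arbitrary: K A rule: finite_induct)
  case empty
  then obtain k0 where "k0 \<in> K" by fastforce
  thus ?case by (intro exI[of _ "\<lambda>k. 1"]) auto
next
  case (insert e E K A)
  show ?case
  proof (cases "\<forall>k\<in>K. A e k = 0")
    case True
    with insert show ?thesis by auto
  next
    case False
    then obtain j where j: "j \<in> K" "A e j \<noteq> 0" by auto
    txt \<open>Gaussian elimination: use the equation e to eliminate the unknown j.\<close>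
    define K' where "K' = K - {j}"
    define A' where "A' e' k = A e' k - A e' j * A e k / A e j" for e' k
    have "finite K'" "card E < card K'" using insert j by (simp_all add: K'_def)
    from insert.IH[OF this, of A'] obtain l where
      l: "\<exists>k\<in>K'. l k \<noteq> 0" "\<forall>e'\<in>E. (\<Sum>k\<in>K'. A' e' k * l k) = 0" by auto
    define L where "L k = (if k = j then - (\<Sum>k\<in>K'. A e k * l k) / A e j else l k)" for k
    have sum_K: "(\<Sum>k\<in>K. f k * L k) = f j * L j + (\<Sum>k\<in>K'. f k * l k)" for f :: "'k \<Rightarrow> real"
    proof -
      have "(\<Sum>k\<in>K. f k * L k) = f j * L j + (\<Sum>k\<in>K'. f k * L k)"
        using j insert.prems by (simp add: K'_def sum.remove)
      also have "(\<Sum>k\<in>K'. f k * L k) = (\<Sum>k\<in>K'. f k * l k)"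
        by (intro sum.cong) (auto simp: L_def K'_def)
      finally show ?thesis .
    qed
    have "(\<Sum>k\<in>K. A e' k * L k) = 0" if "e' \<in> insert e E" for e'
    proof (cases "e' = e")
      case True thus ?thesis using j by (simp add: sum_K) (simp add: L_def)
    next
      case False
      hence "(\<Sum>k\<in>K. A e' k * L k) = (\<Sum>k\<in>K'. A' e' k * l k)"
        using j by (simp add: sum_K) (simp add: L_def A'_def sum_subtractf sum_distrib_left algebra_simps
            sum_divide_distrib)
      thus ?thesis using l(2) that False by simp
    qed
    moreover have "\<exists>k\<in>K. L k \<noteq> 0" using l(1) by (auto simp: L_def K'_def)
    ultimately show ?thesis by blast
  qed
qed

lemma conic_combination_drop_one:
  fixes g :: "'k \<Rightarrow> 'i \<Rightarrow> real"
  assumes "finite I" "finite K" "card I < card K" "\<forall>k\<in>K. a k \<ge> 0"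
  shows "\<exists>k0\<in>K. \<exists>b. (\<forall>k\<in>K. b k \<ge> 0) \<and>
           (\<forall>i\<in>I. (\<Sum>k\<in>K. a k * g k i) = (\<Sum>k\<in>K - {k0}. b k * g k i))"
proof -
  obtain l0 where l0: "\<exists>k\<in>K. l0 k \<noteq> 0" "\<forall>i\<in>I. (\<Sum>k\<in>K. g k i * l0 k) = 0"
    using homogeneous_system_nontrivial_solution[OF assms(1-3), of "\<lambda>i k. g k i"] by blast
  obtain l where l: "\<exists>k\<in>K. l k > 0" "\<forall>i\<in>I. (\<Sum>k\<in>K. g k i * l k) = 0"
  proof (cases "\<exists>k\<in>K. l0 k > 0")
    case True with l0 that show ?thesis by blast
  next
    case False
    have "\<exists>k\<in>K. - l0 k > 0" using False l0(1) by force
    moreover have "\<forall>i\<in>I. (\<Sum>k\<in>K. g k i * - l0 k) = 0" using l0(2) by (simp add: sum_negf)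
    ultimately show ?thesis by (rule that)
  qed
  txt \<open>Move from a along the direction -l until the first coefficient hits zero.\<close>
  define P where "P = {k\<in>K. l k > 0}"
  have P: "finite P" "P \<noteq> {}" using assms(2) l(1) by (auto simp: P_def)
  define t where "t = Min ((\<lambda>k. a k / l k) ` P)"
  have "t \<in> (\<lambda>k. a k / l k) ` P" unfolding t_def using P by (intro Min_in) auto
  then obtain k0 where k0: "k0 \<in> P" "t = a k0 / l k0" by auto
  have t_le: "t \<le> a k / l k" if "k \<in> P" for k using P that by (auto simp: t_def)
  have t_nonneg: "t \<ge> 0" using k0 assms(4) by (auto simp: P_def)
  define b where "b k = a k - t * l k" for k
  have "b k \<ge> 0" if "k \<in> K" for k
  proof (cases "l k > 0")
    case True
    thus ?thesis using t_le[of k] that by (auto simp: P_def b_def field_simps)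
  next
    case False
    hence "t * l k \<le> 0" using t_nonneg by (simp add: mult_nonneg_nonpos)
    moreover have "a k \<ge> 0" using assms(4) that by blast
    ultimately show ?thesis by (simp add: b_def)
  qed
  moreover have b_k0: "b k0 = 0" using k0 by (simp add: P_def b_def)
  have "(\<Sum>k\<in>K. a k * g k i) = (\<Sum>k\<in>K - {k0}. b k * g k i)" if "i \<in> I" for i
  proof -
    have "(\<Sum>k\<in>K. b k * g k i) = (\<Sum>k\<in>K. a k * g k i) - t * (\<Sum>k\<in>K. g k i * l k)"
      by (simp add: b_def algebra_simps sum_subtractf sum_distrib_left)
    hence "(\<Sum>k\<in>K. a k * g k i) = (\<Sum>k\<in>K. b k * g k i)" using l(2) that by simp
    also have "\<dots> = (\<Sum>k\<in>K - {k0}. b k * g k i)"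
      using sum.remove[OF assms(2), of k0 "\<lambda>k. b k * g k i"] k0 b_k0 by (simp add: P_def)
    finally show ?thesis .
  qed
  ultimately show ?thesis using k0 by (auto simp: P_def)
qed

lemma conic_combination_caratheodory:
  fixes g :: "'k \<Rightarrow> 'i \<Rightarrow> real"
  assumes "finite I" "finite K" "\<forall>k\<in>K. a k \<ge> 0"
  shows "\<exists>K' b. K' \<subseteq> K \<and> card K' \<le> card I \<and> (\<forall>k\<in>K'. b k \<ge> 0) \<and>
           (\<forall>i\<in>I. (\<Sum>k\<in>K. a k * g k i) = (\<Sum>k\<in>K'. b k * g k i))"
  using assms(2,3)
proof (induction "card K" arbitrary: K a rule: less_induct)
  case less
  show ?case
  proof (cases "card K \<le> card I")
    case True with less.prems show ?thesis by blast
  next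
    case False
    then obtain k0 b where k0: "k0 \<in> K" and b: "\<forall>k\<in>K. b k \<ge> 0"
      "\<forall>i\<in>I. (\<Sum>k\<in>K. a k * g k i) = (\<Sum>k\<in>K - {k0}. b k * g k i)"
      using conic_combination_drop_one[OF assms(1) less.prems(1) _ less.prems(2)] by force
    have "card (K - {k0}) < card K" using k0 less.prems(1) by (intro card_Diff1_less)
    from less.hyps[OF this _ , of b] less.prems(1) b(1) b(2) show ?thesis by fastforce
  qed
qed

section \<open>Closedness of the completely positive cone\<close>

lemma completely_positive_card_idx_terms:
  assumes "m \<ge> 1" "completely_positive n m A"
  shows "\<exists>u. (\<forall>k<card (idx n m). \<forall>i<n. u k i \<ge> 0) \<and>
             (\<forall>is\<in>idx n m. A is = (\<Sum>k<card (idx n m). prod_list (map (u k) is)))"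
proof -
  obtain r :: nat and u where u: "\<forall>k<r. \<forall>i<n. u k i \<ge> 0"
    "\<forall>is\<in>idx n m. A is = (\<Sum>k<r. prod_list (map (u k) is))"
    using assms(2) unfolding completely_positive_def by auto
  obtain K b where K: "K \<subseteq> {..<r}" "card K \<le> card (idx n m)" "\<forall>k\<in>K. b k \<ge> 0"
    "\<forall>is\<in>idx n m. (\<Sum>k<r. 1 * prod_list (map (u k) is)) = (\<Sum>k\<in>K. b k * prod_list (map (u k) is))"
    using conic_combination_caratheodory[where I = "idx n m" and K = "{..<r}" and a = "\<lambda>_. 1"
        and g = "\<lambda>k is. prod_list (map (u k) is)"] finite_idx by auto
  obtain h where h: "bij_betw h {..<card K} K"
    using ex_bij_betw_nat_finite finite_subset[OF K(1)] by (metis atLeast0LessThan finite_lessThan)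
  txt \<open>The weights b are absorbed into the vectors through m-th roots.\<close>
  define v where "v l i = (if l < card K then root m (b (h l)) * u (h l) i else 0)" for l i
  have hK: "l < card K \<Longrightarrow> h l \<in> K" for l using h by (auto simp: bij_betw_def)
  show ?thesis
  proof (intro exI[of _ v] conjI allI impI ballI)
    fix l i assume "l < card (idx n m)" "i < n"
    thus "v l i \<ge> 0" using u(1) K(1,3) hK
      by (force simp: v_def intro!: mult_nonneg_nonneg real_root_ge_zero)
  next
    fix "is" assume "is": "is \<in> idx n m"
    have len: "length is = m" using "is" by (simp add: idx_def)
    have "A is = (\<Sum>k\<in>K. b k * prod_list (map (u k) is))" using u(2) K(4) "is" by simp
    also have "\<dots> = (\<Sum>l<card K. b (h l) * prod_list (map (u (h l)) is))"
      by (rule sum.reindex_bij_betw[OF h, symmetric])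
    also have "\<dots> = (\<Sum>l<card K. prod_list (map (v l) is))"
    proof (intro sum.cong refl)
      fix l assume l: "l \<in> {..<card K}"
      hence "b (h l) \<ge> 0" using K(3) hK by auto
      moreover have "v l = (\<lambda>i. root m (b (h l)) * u (h l) i)" using l by (simp add: v_def fun_eq_iff)
      ultimately show "b (h l) * prod_list (map (u (h l)) is) = prod_list (map (v l) is)"
        using assms(1) by (simp add: prod_list_map_const_mult len real_root_pow_pos2)
    qed
    also have "\<dots> = (\<Sum>l<card (idx n m). prod_list (map (v l) is))"
      using K(2) assms(1) len
      by (intro sum.mono_neutral_left) (auto simp: v_def neq_Nil_conv Suc_le_length_iff)
    finally show "A is = (\<Sum>l<card (idx n m). prod_list (map (v l) is))" .
  qed
qed

lemma bounded_sequences_convergent_subseq: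
  fixes f :: "nat \<Rightarrow> 'l \<Rightarrow> real"
  assumes "finite L" "\<forall>l\<in>L. Bseq (\<lambda>M. f M l)"
  shows "\<exists>r. strict_mono r \<and> (\<forall>l\<in>L. convergent (\<lambda>M. f (r M) l))"
  using assms
proof (induction L rule: finite_induct)
  case empty
  show ?case using strict_mono_id by blast
next
  case (insert l0 L)
  then obtain r where r: "strict_mono r" "\<forall>l\<in>L. convergent (\<lambda>M. f (r M) l)" by auto
  obtain r' where r': "strict_mono r'" "monoseq (\<lambda>M. f (r (r' M)) l0)"
    using seq_monosub[of "\<lambda>M. f (r M) l0"] by blast
  obtain B where "\<And>M. norm (f M l0) \<le> B" using insert.prems unfolding Bseq_def by blast
  hence "Bseq (\<lambda>M. f (r (r' M)) l0)" by (intro BseqI')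
  hence "convergent (\<lambda>M. f (r (r' M)) l0)" using r'(2) Bseq_monoseq_convergent by blast
  moreover have "convergent (\<lambda>M. f (r (r' M)) l)" if "l \<in> L" for l
    using convergent_subseq_convergent[OF r(2)[rule_format, OF that] r'(1)] by (simp add: o_def)
  moreover have "strict_mono (r \<circ> r')" using r(1) r'(1) by (rule strict_mono_o)
  ultimately show ?case by (intro exI[of _ "r \<circ> r'"]) (auto simp: o_def)
qed

lemma norm_le_max_one_of_power_le:
  assumes "0 \<le> (u::real)" "1 \<le> m" "u ^ m \<le> K"
  shows "norm u \<le> max 1 K"
proof (cases "u \<le> 1")
  case False
  hence "u \<le> u ^ m" using assms(2) by (intro self_le_power) auto
  thus ?thesis using assms(1,3) by simp
qed (use assms(1) in simp)

lemma completely_positive_limit: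
  assumes m: "m \<ge> 1" and cp: "\<forall>M. completely_positive n m (A M)"
    and lim: "\<forall>is\<in>idx n m. (\<lambda>M. A M is) \<longlonglongrightarrow> B is"
  shows "completely_positive n m B"
proof -
  define N where "N = card (idx n m)"
  have "\<forall>M. \<exists>u. (\<forall>k<N. \<forall>i<n. u k i \<ge> 0) \<and>
                 (\<forall>is\<in>idx n m. A M is = (\<Sum>k<N. prod_list (map (u k) is)))"
    using completely_positive_card_idx_terms[OF m] cp unfolding N_def by blast
  then obtain u where u: "\<forall>M. (\<forall>k<N. \<forall>i<n. u M k i \<ge> 0) \<and>
                 (\<forall>is\<in>idx n m. A M is = (\<Sum>k<N. prod_list (map (u M k) is)))"
    by (rule choice[THEN exE])
  hence u_nonneg: "\<And>M k i. k < N \<Longrightarrow> i < n \<Longrightarrow> u M k i \<ge> 0"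
    and u_sum: "\<And>M is. is \<in> idx n m \<Longrightarrow> A M is = (\<Sum>k<N. prod_list (map (u M k) is))"
    by blast+
  txt \<open>The diagonal entries of the convergent sequence bound all the vectors.\<close>
  have "Bseq (\<lambda>M. u M k i)" if k: "k < N" and i: "i < n" for k i
  proof -
    have "convergent (\<lambda>M. A M (replicate m i))"
      using lim replicate_in_idx[OF i] by (blast intro: convergentI)
    then obtain K where K: "\<forall>M. norm (A M (replicate m i)) \<le> K"
      using BseqD[OF convergent_imp_Bseq] by blast
    have diag: "u M k i ^ m \<le> A M (replicate m i)" for M
    proof -
      have "u M k i ^ m \<le> (\<Sum>k'<N. u M k' i ^ m)"
        using k by (intro member_le_sum) (auto simp: u_nonneg i)
      thus ?thesis using u_sum[OF replicate_in_idx[OF i]] by simp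
    qed
    have "norm (u M k i) \<le> max 1 K" for M
      using diag[of M] K[rule_format, of M] u_nonneg[OF k i] m
      by (intro norm_le_max_one_of_power_le) auto
    thus ?thesis by (intro BseqI'[of _ "max 1 K"])
  qed
  then obtain r where r: "strict_mono r"
    "\<forall>ki\<in>{..<N} \<times> {..<n}. convergent (\<lambda>M. case ki of (k, i) \<Rightarrow> u (r M) k i)"
    using bounded_sequences_convergent_subseq[of "{..<N} \<times> {..<n}" "\<lambda>M (k, i). u M k i"] by auto
  define v where "v k i = lim (\<lambda>M. u (r M) k i)" for k i
  have v: "(\<lambda>M. u (r M) k i) \<longlonglongrightarrow> v k i" if "k < N" "i < n" for k i
    using r(2) that unfolding v_def by (auto simp: convergent_LIMSEQ_iff)
  show ?thesis unfolding completely_positive_def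
  proof (intro exI[of _ N] exI[of _ v] conjI allI impI ballI)
    fix k i assume "k < N" "i < n"
    thus "v k i \<ge> 0" using u_nonneg by (intro LIMSEQ_le_const[OF v]) auto
  next
    fix "is" assume "is": "is \<in> idx n m"
    have "(\<lambda>M. A (r M) is) \<longlonglongrightarrow> B is"
      using LIMSEQ_subseq_LIMSEQ[OF lim[rule_format, OF "is"] r(1)] by (simp add: o_def)
    moreover have "(\<lambda>M. A (r M) is) \<longlonglongrightarrow> (\<Sum>k<N. prod_list (map (v k) is))"
      unfolding u_sum[OF "is"] using "is"
      by (intro tendsto_sum tendsto_prod_list) (auto simp: idx_def intro: v)
    ultimately show "B is = (\<Sum>k<N. prod_list (map (v k) is))" by (rule LIMSEQ_unique)
  qed
qed

section \<open>An exponential Riemann sum\<close>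

lemma sum_exp_geometric:
  fixes s :: real
  assumes "s \<noteq> 0"
  shows "(\<Sum>k<N. exp (- s * real (Suc k))) = (1 - exp (- s * real N)) / (exp s - 1)"
proof -
  define q where "q = exp (- s)"
  have q: "q \<noteq> 1" "exp s \<noteq> 1" using assms by (simp_all add: q_def)
  have pow: "exp (- s * real j) = q ^ j" for j
    unfolding q_def exp_of_nat_mult[symmetric] by (simp add: mult.commute)
  have "(\<Sum>k<N. exp (- s * real (Suc k))) = q * (\<Sum>k<N. q ^ k)"
    unfolding pow by (simp add: sum_distrib_left)
  also have "\<dots> = q * ((q ^ N - 1) / (q - 1))" using q by (simp add: geometric_sum)
  also have "q ^ N = exp (- s * real N)" by (rule pow[symmetric])
  also have "q * ((exp (- s * real N) - 1) / (q - 1)) = (1 - exp (- s * real N)) / (exp s - 1)"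
    using q by (simp add: q_def exp_minus field_simps)
  finally show ?thesis .
qed

lemma tendsto_step_div_exp_minus_one:
  fixes s :: real
  assumes "s > 0"
  shows "(\<lambda>M. (1 / real (Suc M)) / (exp (s * (1 / real (Suc M))) - 1)) \<longlonglongrightarrow> 1 / s"
proof -
  have "((\<lambda>y. exp (s * y)) has_field_derivative s) (at 0)"
    by (auto intro!: derivative_eq_intros)
  hence diff_quot: "((\<lambda>y. (exp (s * y) - 1) / y) \<longlongrightarrow> s) (at 0)"
    by (simp add: has_field_derivative_iff)
  have "(\<lambda>M. 1 / real (Suc M)) \<longlonglongrightarrow> 0"
    using LIMSEQ_inverse_real_of_nat by (simp add: inverse_eq_divide)
  hence "filterlim (\<lambda>M. 1 / real (Suc M)) (at 0) sequentially"
    unfolding filterlim_at by auto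
  from tendsto_inverse[OF filterlim_compose[OF diff_quot this]] assms
  show ?thesis by (simp add: inverse_eq_divide mult.commute)
qed

text \<open>A Riemann sum, with step 1 / (M + 1) over [0, M + 1], of the integral of exp (- s t)
  over [0, \<infinity>).\<close>
lemma exp_riemann_sum_tendsto:
  fixes s :: real
  assumes "s > 0"
  shows "(\<lambda>M. \<Sum>k<(Suc M)^2. exp (- s * (real (Suc k) / real (Suc M))) / real (Suc M))
    \<longlonglongrightarrow> 1 / s"
proof -
  define h where "h M = 1 / real (Suc M)" for M
  have closed_form: "(\<Sum>k<(Suc M)^2. exp (- s * (real (Suc k) / real (Suc M))) / real (Suc M))
      = h M / (exp (s * h M) - 1) * (1 - exp (- s * real (Suc M)))" for M
  proof -
    have "(\<Sum>k<(Suc M)^2. exp (- s * (real (Suc k) / real (Suc M))) / real (Suc M))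
        = h M * (\<Sum>k<(Suc M)^2. exp (- (s * h M) * real (Suc k)))"
      by (simp add: sum_distrib_left h_def)
    also have "\<dots> = h M * ((1 - exp (- (s * h M) * real ((Suc M)^2))) / (exp (s * h M) - 1))"
    proof -
      have "s * h M \<noteq> 0" using assms by (simp add: h_def)
      from sum_exp_geometric[OF this] show ?thesis by (simp only:)
    qed
    also have "- (s * h M) * real ((Suc M)^2) = - s * real (Suc M)"
      by (simp add: h_def power2_eq_square field_simps)
    finally show ?thesis by simp
  qed
  have "(\<lambda>M. exp (- s * real (Suc M))) \<longlonglongrightarrow> 0"
  proof -
    have "filterlim (\<lambda>M. s * real (Suc M)) at_top sequentially"
      by (intro filterlim_tendsto_pos_mult_at_top[OF tendsto_const assms]
          filterlim_compose[OF filterlim_real_sequentially filterlim_Suc])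
    hence "filterlim (\<lambda>M. - (s * real (Suc M))) at_bot sequentially"
      by (simp add: filterlim_uminus_at_top)
    from filterlim_compose[OF exp_at_bot this] show ?thesis by simp
  qed
  hence "(\<lambda>M. h M / (exp (s * h M) - 1) * (1 - exp (- s * real (Suc M)))) \<longlonglongrightarrow> 1 / s * (1 - 0)"
    unfolding h_def by (intro tendsto_intros tendsto_step_div_exp_minus_one[OF assms])
  thus ?thesis unfolding closed_form by simp
qed

lemma completely_positive_tapply:
  assumes "m \<ge> 1" "i < n" "\<forall>is\<in>idx n m. A is = (\<Sum>k<r. prod_list (map (u k) is))"
  shows "tapply n m A x i = (\<Sum>k<r. u k i * (\<Sum>j<n. u k j * x j) ^ (m - 1))"
proof -
  have "tapply n m A x i = (\<Sum>js\<in>idx n (m - 1). \<Sum>k<r. u k i * prod_list (map (\<lambda>j. u k j * x j) js))"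
    unfolding tapply_def
  proof (intro sum.cong refl)
    fix js assume "js \<in> idx n (m - 1)"
    hence "i # js \<in> idx n m" using assms(1,2) by (auto simp: idx_def)
    thus "A (i # js) * prod_list (map x js) = (\<Sum>k<r. u k i * prod_list (map (\<lambda>j. u k j * x j) js))"
      using assms(3) by (simp add: sum_distrib_right prod_list_map_mult mult.assoc)
  qed
  also have "\<dots> = (\<Sum>k<r. u k i * (\<Sum>js\<in>idx n (m - 1). prod_list (map (\<lambda>j. u k j * x j) js)))"
    by (subst sum.swap) (simp add: sum_distrib_left)
  finally show ?thesis by (simp add: sum_idx_prod_list)
qed

text \<open>For m - 1 even the eigenvalue equation at a nonzero coordinate already forces the sign;
  for m even one pairs the equation with x, which turns its left side into a sum of m-th powers.\<close>
lemma completely_positive_H_eigenvalue_nonneg: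
  assumes m: "m \<ge> 1" and cp: "completely_positive n m A" and ev: "H_eigenvalue n m A lam"
  shows "lam \<ge> 0"
proof -
  obtain r :: nat and u where u_nonneg: "\<forall>k<r. \<forall>i<n. u k i \<ge> 0"
    and u_sum: "\<forall>is\<in>idx n m. A is = (\<Sum>k<r. prod_list (map (u k) is))"
    using cp unfolding completely_positive_def by auto
  obtain x i0 where i0: "i0 < n" "x i0 \<noteq> 0"
    and eq: "\<And>i. i < n \<Longrightarrow> tapply n m A x i = lam * x i ^ (m - 1)"
    using ev unfolding H_eigenvalue_def by blast
  define p where "p k = (\<Sum>j<n. u k j * x j)" for k
  have tapply_eq: "tapply n m A x i = (\<Sum>k<r. u k i * p k ^ (m - 1))" if "i < n" for i
    using completely_positive_tapply[OF m that u_sum] by (simp add: p_def)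
  have pow: "a * a ^ (m - 1) = a ^ m" for a :: real
    using m by (simp add: power_eq_if)
  show ?thesis
  proof (cases "even (m - 1)")
    case True
    have "lam * x i0 ^ (m - 1) \<ge> 0"
      unfolding eq[OF i0(1), symmetric] tapply_eq[OF i0(1)] using u_nonneg i0(1) True
      by (auto intro!: sum_nonneg mult_nonneg_nonneg simp: zero_le_even_power)
    moreover have "x i0 ^ (m - 1) > 0" using True i0(2) by (simp add: zero_less_power_eq)
    ultimately show ?thesis by (simp add: zero_le_mult_iff)
  next
    case False
    hence even: "even m" using m by (cases m) auto
    have "lam * (\<Sum>i<n. x i ^ m) = (\<Sum>i<n. x i * tapply n m A x i)"
      by (simp add: sum_distrib_left eq pow[symmetric] mult_ac)
    also have "\<dots> = (\<Sum>k<r. (\<Sum>i<n. u k i * x i) * p k ^ (m - 1))"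
      by (simp add: tapply_eq sum_distrib_left sum_distrib_right mult_ac sum.swap[of _ "{..<n}"])
    also have "\<dots> = (\<Sum>k<r. p k ^ m)" by (simp only: p_def[symmetric] pow)
    finally have "lam * (\<Sum>i<n. x i ^ m) \<ge> 0"
      using even by (auto intro!: sum_nonneg simp: zero_le_even_power)
    moreover have "(\<Sum>i<n. x i ^ m) > 0"
      using even i0 by (intro sum_pos2[of _ i0]) (auto simp: zero_le_even_power zero_less_power_eq)
    ultimately show ?thesis by (simp add: zero_le_mult_iff)
  qed
qed

lemma completely_positive_nonneg:
  assumes "completely_positive n m A" "is \<in> idx n m"
  shows "A is \<ge> 0"
proof -
  obtain r :: nat and u where "\<forall>k<r. \<forall>i<n. u k i \<ge> 0"
    "\<forall>is\<in>idx n m. A is = (\<Sum>k<r. prod_list (map (u k) is))"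
    using assms(1) unfolding completely_positive_def by auto
  thus ?thesis using assms(2) by (auto simp: idx_def subset_iff intro!: sum_nonneg prod_list_nonneg)
qed

lemma completely_positive_imp_doubly_nonnegative:
  "m \<ge> 1 \<Longrightarrow> completely_positive n m A \<Longrightarrow> doubly_nonnegative n m A"
  unfolding doubly_nonnegative_def
  by (blast intro: completely_positive_nonneg completely_positive_H_eigenvalue_nonneg)

lemma strictly_copositive_diag_pos:
  assumes "strictly_copositive n m A" "i < n"
  shows "A (replicate m i) > 0"
proof -
  have "nonneg_vec n (\<lambda>j. if j = i then 1 else 0)" "\<exists>j<n. (if j = i then 1 else 0 :: real) \<noteq> 0"
    using assms(2) by (auto simp: nonneg_vec_def)
  hence "tform n m A (\<lambda>j. if j = i then 1 else 0) > 0"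
    using assms(1) unfolding strictly_copositive_def by blast
  thus ?thesis using tform_unit_vector[OF assms(2)] by simp
qed

lemma strictly_increasing_imp_strictly_copositive:
  assumes "m \<ge> 1" "strictly_increasing_on_nonneg n m A"
  shows "strictly_copositive n m A"
  unfolding strictly_copositive_def
proof (intro allI impI)
  fix x assume "nonneg_vec n x \<and> (\<exists>i<n. x i \<noteq> 0)"
  hence "tform n m A x > tform n m A (\<lambda>_. 0)"
    using assms(2) unfolding strictly_increasing_on_nonneg_def nonneg_vec_def by auto
  thus "tform n m A x > 0" using tform_zero[OF assms(1)] by simp
qed

lemma nonneg_pos_diag_imp_strictly_increasing:
  assumes m: "m \<ge> 1" and nonneg: "\<forall>is\<in>idx n m. A is \<ge> 0"
    and diag: "\<forall>i<n. A (replicate m i) > 0"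
  shows "strictly_increasing_on_nonneg n m A"
  unfolding strictly_increasing_on_nonneg_def
proof (intro allI impI)
  fix x y
  assume xy: "nonneg_vec n x \<and> nonneg_vec n y \<and> (\<forall>i<n. y i \<le> x i) \<and> (\<exists>i<n. x i \<noteq> y i)"
  then obtain i where i: "i < n" "y i < x i" by force
  show "tform n m A y < tform n m A x" unfolding tform_def
  proof (rule sum_strict_mono_ex1[OF finite_idx ballI bexI])
    fix "is" assume "is \<in> idx n m"
    thus "A is * prod_list (map y is) \<le> A is * prod_list (map x is)"
      using nonneg xy by (auto simp: idx_def nonneg_vec_def intro!: mult_left_mono prod_list_map_mono)
  next
    have "y i ^ m < x i ^ m" using i xy m by (intro power_strict_mono) (auto simp: nonneg_vec_def)
    thus "A (replicate m i) * prod_list (map y (replicate m i))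
        < A (replicate m i) * prod_list (map x (replicate m i))"
      using diag i by simp
    show "replicate m i \<in> idx n m" by (rule replicate_in_idx[OF i(1)])
  qed
qed

lemma cauchy_tensor_pos:
  assumes "\<forall>i<n. c i > 0" "m \<ge> 1" "is \<in> idx n m"
  shows "cauchy_tensor c is > 0"
proof -
  have "sum_list (map (\<lambda>_. 0) is) < sum_list (map c is)"
    using assms by (intro sum_list_strict_mono) (auto simp: idx_def)
  thus ?thesis by (simp add: cauchy_tensor_def)
qed

lemma cauchy_diag_nonneg_imp_gen_pos:
  assumes "cauchy_gen_ok n m c" "m \<ge> 1" "i < n" "cauchy_tensor c (replicate m i) \<ge> 0"
  shows "c i > 0"
proof -
  have "c i \<noteq> 0" using assms(1,3) by (simp add: cauchy_gen_ok_def)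
  moreover have "real m * c i \<ge> 0"
    using assms(4) by (simp add: cauchy_tensor_def sum_list_replicate zero_le_divide_1_iff)
  ultimately show ?thesis using assms(2) by (simp add: zero_le_mult_iff)
qed

lemma cauchy_tensor_completely_positive:
  assumes pos: "\<forall>i<n. c i > 0" and m: "m \<ge> 1"
  shows "completely_positive n m (cauchy_tensor c)"
proof (rule completely_positive_limit[OF m])
  define R where "R M is = (\<Sum>k<(Suc M)^2.
      exp (- sum_list (map c is) * (real (Suc k) / real (Suc M))) / real (Suc M))" for M "is"
  show "\<forall>is\<in>idx n m. (\<lambda>M. R M is) \<longlonglongrightarrow> cauchy_tensor c is"
    using cauchy_tensor_pos[OF pos m] exp_riemann_sum_tendsto
    by (simp add: R_def cauchy_tensor_def)
  show "\<forall>M. completely_positive n m (R M)"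
  proof
    fix M
    define u where "u k i = root m (1 / real (Suc M)) * exp (- (c i * (real (Suc k) / real (Suc M))))"
      for k i
    have "prod_list (map (u k) is) =
        exp (- sum_list (map c is) * (real (Suc k) / real (Suc M))) / real (Suc M)"
      if "length is = m" for k "is"
    proof -
      have neg: "sum_list (map (\<lambda>i. - (c i * t)) xs) = - sum_list (map c xs) * t" for xs and t :: real
        by (induction xs) (simp_all add: algebra_simps)
      have root: "root m (1 / real (Suc M)) ^ m = 1 / real (Suc M)"
        using m by (intro real_root_pow_pos2) auto
      show ?thesis
        unfolding u_def prod_list_map_const_mult prod_list_map_exp neg that root by simp
    qed
    thus "completely_positive n m (R M)" unfolding completely_positive_def R_def
      by (intro exI[of _ "(Suc M)^2"] exI[of _ u])
        (auto simp: u_def idx_def intro!: mult_nonneg_nonneg real_root_ge_zero)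
  qed
qed

theorem mainTheorem17:
  fixes n m :: nat and c :: "nat \<Rightarrow> real"
  assumes "m \<ge> 2" and "n \<ge> 1" and "cauchy_gen_ok n m c"
  shows "(completely_positive n m (cauchy_tensor c) \<longleftrightarrow> strictly_copositive n m (cauchy_tensor c))
       \<and> (strictly_copositive n m (cauchy_tensor c) \<longleftrightarrow> (\<forall>i<n. c i > 0))
       \<and> ((\<forall>i<n. c i > 0) \<longleftrightarrow> strictly_increasing_on_nonneg n m (cauchy_tensor c))
       \<and> (strictly_increasing_on_nonneg n m (cauchy_tensor c) \<longleftrightarrow> doubly_nonnegative n m (cauchy_tensor c))"
proof -
  have m: "m \<ge> 1" using assms(1) by simp
  let ?C = "cauchy_tensor c"
  have diag: "\<forall>i<n. ?C (replicate m i) \<ge> 0 \<Longrightarrow> \<forall>i<n. c i > 0"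
    using cauchy_diag_nonneg_imp_gen_pos[OF assms(3) m] by blast
  have "(\<forall>i<n. c i > 0) \<Longrightarrow> completely_positive n m ?C"
    using cauchy_tensor_completely_positive m by blast
  moreover have "completely_positive n m ?C \<Longrightarrow> doubly_nonnegative n m ?C"
    using completely_positive_imp_doubly_nonnegative[OF m] .
  moreover have "doubly_nonnegative n m ?C \<Longrightarrow> \<forall>i<n. c i > 0"
    using diag replicate_in_idx unfolding doubly_nonnegative_def by blast
  moreover have "strictly_increasing_on_nonneg n m ?C" if pos: "\<forall>i<n. c i > 0"
    using cauchy_tensor_pos[OF pos m] replicate_in_idx
    by (intro nonneg_pos_diag_imp_strictly_increasing[OF m]) (auto intro: less_imp_le)
  moreover have "strictly_increasing_on_nonneg n m ?C \<Longrightarrow> strictly_copositive n m ?C"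
    using strictly_increasing_imp_strictly_copositive[OF m] .
  moreover have "strictly_copositive n m ?C \<Longrightarrow> \<forall>i<n. c i > 0"
    using diag strictly_copositive_diag_pos less_imp_le by blast
  ultimately show ?thesis by blast
qed

end
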